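(* Let $\varphi$ be a skew-morphism of a finite group $A$ and let $\Pi$ be a set of primes. Then $\mathrm{Orbit}^\Pi\varphi=\{x\in A : |O_x| \text{ is a } \Pi\text{-number}\}$ is a $\varphi$-invariant subgroup of $A$ containing $\mathrm{Fix}\,\varphi$.
   Context: A skew-morphism of a finite group $A$ is a permutation $\varphi$ of the set $A$ with $\varphi(1)=1$ for which there exists a function $\pi:A\to\mathbb{Z}_n$, where $n$ is the order of $\varphi$ as a permutation, such that $\varphi(xy)=\varphi(x)\varphi^{\pi(x)}(y)$ for all $x,y\in A$. A subset $N\subseteq A$ is $\varphi$-invariant if $\varphi(N)=N$. $O_x$ denotes the orbit of $\varphi$ containing $x$, and $\mathrm{Fix}\,\varphi=\{x\in A:\varphi(x)=x\}$. For a set $\Pi$ of primes, a positive integer is a $\Pi$-number if all its prime divisors lie in $\Pi$; by convention $1$ is a $\Pi$-number. *)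

theory Defs
  imports "HOL-Algebra.Group" "HOL-Computational_Algebra.Primes"
begin

definition perm_order :: "('a, 'b) monoid_scheme \<Rightarrow> ('a \<Rightarrow> 'a) \<Rightarrow> nat" where
  "perm_order G phi = (LEAST k. 0 < k \<and> (\<forall>x\<in>carrier G. (phi ^^ k) x = x))"

text \<open>Skew-morphism: permutation of the carrier fixing 1, with a power function
  pi : carrier G -> Z_n (represented by residues 0..n-1), n the order of phi.\<close>
definition skew_morphism :: "('a, 'b) monoid_scheme \<Rightarrow> ('a \<Rightarrow> 'a) \<Rightarrow> bool" where
  "skew_morphism G phi \<longleftrightarrow>
     bij_betw phi (carrier G) (carrier G) \<and> phi \<one>\<^bsub>G\<^esub> = \<one>\<^bsub>G\<^esub> \<and>
     (\<exists>pi :: 'a \<Rightarrow> nat. (\<forall>x\<in>carrier G. pi x < perm_order G phi) \<and>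
        (\<forall>x\<in>carrier G. \<forall>y\<in>carrier G.
           phi (x \<otimes>\<^bsub>G\<^esub> y) = phi x \<otimes>\<^bsub>G\<^esub> (phi ^^ pi x) y))"

definition orbit_of :: "('a \<Rightarrow> 'a) \<Rightarrow> 'a \<Rightarrow> 'a set" where
  "orbit_of phi x = {(phi ^^ k) x | k. True}"

definition fix_set :: "('a, 'b) monoid_scheme \<Rightarrow> ('a \<Rightarrow> 'a) \<Rightarrow> 'a set" where
  "fix_set G phi = {x \<in> carrier G. phi x = x}"

definition is_Pi_number :: "nat set \<Rightarrow> nat \<Rightarrow> bool" where
  "is_Pi_number P m \<longleftrightarrow> (\<forall>p. prime p \<and> p dvd m \<longrightarrow> p \<in> P)"

definition orbit_Pi :: "('a, 'b) monoid_scheme \<Rightarrow> ('a \<Rightarrow> 'a) \<Rightarrow> nat set \<Rightarrow> 'a set" where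
  "orbit_Pi G phi P = {x \<in> carrier G. is_Pi_number P (card (orbit_of phi x))}"

end

theory Submission
  imports Defs "HOL-Algebra.Multiplicative_Group" "HOL-Combinatorics.Cycles"
begin

text \<open>The orbit length of x is the least n with \<open>\<phi>\<^sup>n(x) = x\<close>, so it divides every such n.
  Iterating the skew rule gives \<open>\<phi>\<^sup>k(xy) = \<phi>\<^sup>k(x) \<phi>\<^sup>s(y)\<close> for some s; with
  \<open>k = |O\<^sub>x| q\<close> this becomes \<open>\<phi>\<^sup>k(xy) = x \<phi>\<^sup>s\<^sup>q(y)\<close>, and for \<open>q = |O\<^sub>y|\<close> it returns
  xy. Hence \<open>|O\<^sub>x\<^sub>y|\<close> divides \<open>|O\<^sub>x| |O\<^sub>y|\<close>, so the elements with \<open>\<Pi>\<close>-orbits form a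
  submonoid, which in a finite group is a subgroup. Invariance holds because \<open>\<phi>\<close> permutes each
  orbit, and fixed points have orbits of length 1.\<close>

lemma funpow_eq_on_invariant:
  assumes "f ` S \<subseteq> S" "\<And>y. y \<in> S \<Longrightarrow> g y = f y" "x \<in> S"
  shows "(g ^^ n) x = (f ^^ n) x"
proof -
  have "(g ^^ n) x = (f ^^ n) x \<and> (f ^^ n) x \<in> S" by (induction n) (use assms in auto)
  then show ?thesis ..
qed

lemma card_orbit_of_dvd_iff:
  assumes bij: "bij_betw f S S" and "finite S" and x: "x \<in> S"
  shows "card (orbit_of f x) dvd n \<longleftrightarrow> (f ^^ n) x = x"
proof -
  txt \<open>Extend \<open>f\<close> by the identity outside \<open>S\<close> to get a permutation, for which
    \<open>least_power\<close> is available.\<close>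
  define g where "g y = (if y \<in> S then f y else y)" for y
  have "g permutes S"
    using bij by (intro bij_imp_permutes) (auto simp: g_def cong: bij_betw_cong)
  then have perm: "permutation g"
    using \<open>finite S\<close> permutation_permutes by blast
  have g_f: "(g ^^ k) x = (f ^^ k) x" for k
    using funpow_eq_on_invariant[of f S g] bij x by (auto simp: g_def bij_betw_def)
  have "orbit_of f x = range (\<lambda>k. (g ^^ k) x)"
    by (auto simp: orbit_of_def g_f)
  also have "\<dots> = set (support g x)"
    using support_set[OF perm] by simp
  finally have "card (orbit_of f x) = least_power g x"
    using cycle_of_permutation[OF perm] distinct_card by fastforce
  then show ?thesis
    using least_power_dvd[OF perm] by (simp add: g_f)
qed

lemma card_orbit_of_image:
  assumes bij: "bij_betw f S S" and "finite S" and x: "x \<in> S"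
  shows "card (orbit_of f (f x)) = card (orbit_of f x)"
proof -
  have fx: "f x \<in> S" using bij x by (auto simp: bij_betw_def)
  have "(f ^^ n) (f x) = f x \<longleftrightarrow> (f ^^ n) x = x" for n
  proof -
    have "(f ^^ n) (f x) = f ((f ^^ n) x)" by (simp add: funpow_swap1)
    moreover have "(f ^^ n) x \<in> S" using bij_betw_funpow[OF bij] x by (auto simp: bij_betw_def)
    ultimately show ?thesis using bij_betw_imp_inj_on[OF bij] x by (simp add: inj_on_eq_iff)
  qed
  then have same_dvd: "card (orbit_of f (f x)) dvd n \<longleftrightarrow> card (orbit_of f x) dvd n" for n
    using card_orbit_of_dvd_iff[OF bij \<open>finite S\<close>] x fx by simp
  show ?thesis
    using same_dvd[of "card (orbit_of f x)"] same_dvd[of "card (orbit_of f (f x))"]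
    by (simp add: dvd_antisym)
qed

lemma is_Pi_number_dvd: "is_Pi_number P n \<Longrightarrow> m dvd n \<Longrightarrow> is_Pi_number P m"
  unfolding is_Pi_number_def by (meson dvd_trans)

lemma is_Pi_number_mult:
  "is_Pi_number P m \<Longrightarrow> is_Pi_number P n \<Longrightarrow> is_Pi_number P (m * n)"
  unfolding is_Pi_number_def by (meson prime_dvd_mult_iff)

lemma is_Pi_number_1 [simp]: "is_Pi_number P 1"
  by (simp add: is_Pi_number_def)

lemma (in submonoid) nat_pow_closed:
  "monoid G \<Longrightarrow> x \<in> H \<Longrightarrow> x [^]\<^bsub>G\<^esub> (n::nat) \<in> H"
  by (induction n) (auto simp: monoid.nat_pow_Suc)

lemma (in group) finite_submonoid_subgroup:
  assumes "finite (carrier G)" and "submonoid H G"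
  shows "subgroup H G"
proof (rule submonoid_subgroupI[OF \<open>submonoid H G\<close>])
  fix x assume x: "x \<in> H"
  then have xG: "x \<in> carrier G" using submonoid.subset[OF \<open>submonoid H G\<close>] by blast
  have "order G \<noteq> 0"
    using assms(1) by (auto simp: order_def)
  then have "x [^] (order G - 1) \<otimes> x = \<one>"
    using pow_order_eq_1[OF xG] by (metis Suc_diff_1 neq0_conv nat_pow_Suc)
  then have "inv x = x [^] (order G - 1)"
    using xG by (simp add: inv_equality)
  then show "inv x \<in> H"
    using submonoid.nat_pow_closed[OF \<open>submonoid H G\<close> is_monoid x] by simp
qed

lemma (in monoid) skew_funpow_mult:
  assumes closed: "phi ` carrier G \<subseteq> carrier G"
    and skew: "\<And>x y. x \<in> carrier G \<Longrightarrow> y \<in> carrier G \<Longrightarrow> phi (x \<otimes> y) = phi x \<otimes> (phi ^^ pow_fun x) y"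
    and x: "x \<in> carrier G"
  shows "\<exists>s. \<forall>y\<in>carrier G. (phi ^^ k) (x \<otimes> y) = (phi ^^ k) x \<otimes> (phi ^^ s) y"
proof (induction k)
  case 0
  show ?case by (rule exI[of _ 0]) simp
next
  case (Suc k)
  then obtain s where s: "\<forall>y\<in>carrier G. (phi ^^ k) (x \<otimes> y) = (phi ^^ k) x \<otimes> (phi ^^ s) y" ..
  have closed_funpow: "(phi ^^ n) z \<in> carrier G" if "z \<in> carrier G" for n z
    using that closed by (induction n) auto
  have "(phi ^^ Suc k) (x \<otimes> y) = (phi ^^ Suc k) x \<otimes> (phi ^^ (pow_fun ((phi ^^ k) x) + s)) y"
    if y: "y \<in> carrier G" for y
    using s y x by (simp add: skew closed_funpow funpow_add)
  then show ?case by blast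
qed

lemma (in monoid) skew_card_orbit_of_mult_dvd:
  assumes bij: "bij_betw phi (carrier G) (carrier G)" and fin: "finite (carrier G)"
    and skew: "\<And>x y. x \<in> carrier G \<Longrightarrow> y \<in> carrier G \<Longrightarrow> phi (x \<otimes> y) = phi x \<otimes> (phi ^^ pow_fun x) y"
    and x: "x \<in> carrier G" and y: "y \<in> carrier G"
  shows "card (orbit_of phi (x \<otimes> y)) dvd card (orbit_of phi x) * card (orbit_of phi y)"
proof -
  define c where "c = card (orbit_of phi x)"
  define d where "d = card (orbit_of phi y)"
  note card_dvd_iff = card_orbit_of_dvd_iff[OF bij fin]
  have closed: "phi ` carrier G \<subseteq> carrier G" using bij by (simp add: bij_betw_def)
  obtain s where s: "\<forall>z\<in>carrier G. (phi ^^ c) (x \<otimes> z) = (phi ^^ c) x \<otimes> (phi ^^ s) z"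
    using skew_funpow_mult[OF closed skew x] by blast
  have x_fixed: "(phi ^^ c) x = x" using card_dvd_iff[OF x, of c] by (simp add: c_def)
  have iter: "(phi ^^ (c * q)) (x \<otimes> y) = x \<otimes> (phi ^^ (s * q)) y" for q
  proof (induction q)
    case (Suc q)
    have y_iter: "(phi ^^ (s * q)) y \<in> carrier G"
      using bij_betw_funpow[OF bij] y by (auto simp: bij_betw_def)
    have "(phi ^^ (c * Suc q)) (x \<otimes> y) = (phi ^^ c) ((phi ^^ (c * q)) (x \<otimes> y))"
      by (simp add: funpow_add)
    also have "\<dots> = (phi ^^ c) x \<otimes> (phi ^^ s) ((phi ^^ (s * q)) y)"
      using Suc.IH s y_iter by simp
    also have "\<dots> = x \<otimes> (phi ^^ (s * Suc q)) y"
      using x_fixed by (simp add: funpow_add)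
    finally show ?case .
  qed simp
  have "(phi ^^ (s * d)) y = y" using card_dvd_iff[OF y, of "s * d"] by (simp add: d_def)
  then have "(phi ^^ (c * d)) (x \<otimes> y) = x \<otimes> y" by (simp add: iter)
  then show ?thesis
    using card_dvd_iff[OF m_closed[OF x y]] by (simp add: c_def d_def)
qed

lemma fix_set_subset_orbit_Pi:
  assumes bij: "bij_betw phi (carrier G) (carrier G)" and fin: "finite (carrier G)"
  shows "fix_set G phi \<subseteq> orbit_Pi G phi P"
proof
  fix x assume "x \<in> fix_set G phi"
  then have x: "x \<in> carrier G" and "phi x = x" by (auto simp: fix_set_def)
  then have "card (orbit_of phi x) dvd 1"
    using card_orbit_of_dvd_iff[OF bij fin x, of 1] by simp
  then show "x \<in> orbit_Pi G phi P"
    using x is_Pi_number_dvd[OF is_Pi_number_1] by (simp add: orbit_Pi_def)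
qed

lemma image_orbit_Pi:
  assumes bij: "bij_betw phi (carrier G) (carrier G)" and fin: "finite (carrier G)"
  shows "phi ` orbit_Pi G phi P = orbit_Pi G phi P"
proof -
  have phi_mem_iff: "phi x \<in> orbit_Pi G phi P \<longleftrightarrow> x \<in> orbit_Pi G phi P" if "x \<in> carrier G" for x
    using that card_orbit_of_image[OF bij fin] bij_betw_apply[OF bij] by (simp add: orbit_Pi_def)
  have "orbit_Pi G phi P \<subseteq> phi ` carrier G"
    using bij_betw_imp_surj_on[OF bij] by (auto simp: orbit_Pi_def)
  then show ?thesis
    using phi_mem_iff by (auto simp: orbit_Pi_def)
qed

lemma (in monoid) skew_orbit_Pi_submonoid:
  assumes bij: "bij_betw phi (carrier G) (carrier G)" and fin: "finite (carrier G)"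
    and "phi \<one> = \<one>"
    and skew: "\<And>x y. x \<in> carrier G \<Longrightarrow> y \<in> carrier G \<Longrightarrow> phi (x \<otimes> y) = phi x \<otimes> (phi ^^ pow_fun x) y"
  shows "submonoid (orbit_Pi G phi P) G"
proof
  show "\<one> \<in> orbit_Pi G phi P"
    using fix_set_subset_orbit_Pi[OF bij fin] \<open>phi \<one> = \<one>\<close> by (auto simp: fix_set_def)
  fix x y assume "x \<in> orbit_Pi G phi P" and "y \<in> orbit_Pi G phi P"
  then have "x \<in> carrier G" "y \<in> carrier G"
    and "is_Pi_number P (card (orbit_of phi x) * card (orbit_of phi y))"
    by (simp_all add: orbit_Pi_def is_Pi_number_mult)
  then show "x \<otimes> y \<in> orbit_Pi G phi P"
    using skew_card_orbit_of_mult_dvd[OF bij fin skew] is_Pi_number_dvd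
    by (simp add: orbit_Pi_def)
qed (auto simp: orbit_Pi_def)

theorem mainTheorem2:
  fixes G (structure) and phi :: "'a \<Rightarrow> 'a" and P :: "nat set"
  assumes "group G" and "finite (carrier G)"
    and "skew_morphism G phi"
    and "\<forall>p\<in>P. prime p"
  shows "subgroup (orbit_Pi G phi P) G \<and> phi ` (orbit_Pi G phi P) = orbit_Pi G phi P
         \<and> fix_set G phi \<subseteq> orbit_Pi G phi P"
proof -
  interpret group G by fact
  note fin = \<open>finite (carrier G)\<close>
  have bij: "bij_betw phi (carrier G) (carrier G)" and "phi \<one> = \<one>"
    using \<open>skew_morphism G phi\<close> by (simp_all add: skew_morphism_def)
  obtain pow_fun where "\<forall>x\<in>carrier G. \<forall>y\<in>carrier G. phi (x \<otimes> y) = phi x \<otimes> (phi ^^ pow_fun x) y"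
    using \<open>skew_morphism G phi\<close> unfolding skew_morphism_def by blast
  then have "submonoid (orbit_Pi G phi P) G"
    using skew_orbit_Pi_submonoid[OF bij fin \<open>phi \<one> = \<one>\<close>] by blast
  then show ?thesis
    using finite_submonoid_subgroup[OF fin] image_orbit_Pi[OF bij fin]
      fix_set_subset_orbit_Pi[OF bij fin] by simp
qed

end
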